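(* Let $\mathbf{x}_0$ be a random vector in $\mathbb{R}^n$ with distribution $p(\mathbf{x}_0)$, let $\mathcal E:\mathbb{R}^n\to\mathbb{R}^k$ be an encoder and set $\mathbf{z}_0=\mathcal E(\mathbf{x}_0)$. Let $\mathbf{y}$ be a measurement with conditional distribution $p(\mathbf{y}\mid\mathbf{x}_0)$, and for each time $t$ let $\mathbf{z}_t=\mathbf{z}_0+\sigma_t\boldsymbol{\epsilon}_t$ with $\boldsymbol{\epsilon}_t\sim\mathcal N(\mathbf{0},\mathbf{I})$, where, given $\mathbf{x}_0$, the variables $\mathbf{y}$ and the $\mathbf{z}_t$ for different $t$ are mutually conditionally independent (so $p(\mathbf{z}_t\mid\mathbf{x}_0)=p(\mathbf{z}_t\mid\mathbf{z}_0)=\mathcal N(\mathbf{z}_t;\mathcal E(\mathbf{x}_0),\sigma_t^2\mathbf{I})$). Fix times $t_1,t_2$ and a value of $\mathbf{y}$, and suppose $\mathbf{z}_{t_1}$ is sampled from the time-marginal $p(\mathbf{z}_{t_1}\mid\mathbf{y})$. Then: (i) if $\mathbf{x}_0\sim p(\mathbf{x}_0\mid\mathbf{z}_{t_1},\mathbf{y})$ and then $\mathbf{z}_{t_2}\sim\mathcal N(\mathcal E(\mathbf{x}_0),\sigma_{t_2}^2\mathbf{I})$, i.e. $\mathbf{z}_{t_2}\sim\mathbb E_{\mathbf{x}_0\sim p(\mathbf{x}_0\mid\mathbf{z}_{t_1},\mathbf{y})}[\mathcal N(\mathcal E(\mathbf{x}_0),\sigma_{t_2}^2\mathbf{I})]$,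 then $\mathbf{z}_{t_2}$ is distributed according to $p(\mathbf{z}_{t_2}\mid\mathbf{y})$; (ii) if $\mathbf{z}_0\sim p(\mathbf{z}_0\mid\mathbf{z}_{t_1},\mathbf{y})$ and then $\mathbf{z}_{t_2}\sim\mathcal N(\mathbf{z}_0,\sigma_{t_2}^2\mathbf{I})$, i.e. $\mathbf{z}_{t_2}\sim\mathbb E_{\mathbf{z}_0\sim p(\mathbf{z}_0\mid\mathbf{z}_{t_1},\mathbf{y})}[\mathcal N(\mathbf{z}_0,\sigma_{t_2}^2\mathbf{I})]$, then $\mathbf{z}_{t_2}$ is also distributed according to $p(\mathbf{z}_{t_2}\mid\mathbf{y})$.
   Context: $\sigma_t\ge 0$ is a noise schedule (noise standard deviation at time $t$); $\mathcal N(\mathbf{m},0\cdot\mathbf{I})$ is understood as the point mass at $\mathbf{m}$. This is the latent-diffusion setting: $\mathbf{z}_t$ is the latent code of clean data perturbed by Gaussian noise of variance $\sigma_t^2$. All conditional distributions $p(\cdot\mid\cdot)$ are those of the joint distribution just described; $p(\mathbf{z}_t\mid\mathbf{y})$ is the conditional law of $\mathbf{z}_t$ given $\mathbf{y}$. *)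

theory Defs
  imports "HOL-Probability.Probability"
begin

definition std_gauss :: "(real ^ 'k) measure" where
  "std_gauss = density lborel (\<lambda>z. ennreal (\<Prod>i\<in>UNIV. std_normal_density (z $ i)))"

text \<open>N(m, s^2 I) as the law of m + s * eps, eps ~ N(0,I); for s = 0 this is the point mass at m.\<close>
definition gauss :: "real ^ 'k \<Rightarrow> real \<Rightarrow> (real ^ 'k) measure" where
  "gauss m s = distr std_gauss borel (\<lambda>e. m + s *\<^sub>R e)"

text \<open>Joint law of (x0, y, z_t) where x0 ~ P, y | x0 ~ Ky x0, z_t | x0 ~ N(E x0, s^2 I),
  with y and z_t conditionally independent given x0.\<close>
definition joint3 ::
  "(real ^ 'n) measure \<Rightarrow> 'y measure \<Rightarrow> (real ^ 'n \<Rightarrow> 'y measure) \<Rightarrow>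
   (real ^ 'n \<Rightarrow> real ^ 'k) \<Rightarrow> real \<Rightarrow> ((real ^ 'n) \<times> 'y \<times> (real ^ 'k)) measure" where
  "joint3 P MY Ky E s =
     P \<bind> (\<lambda>x. Ky x \<bind> (\<lambda>y. gauss (E x) s \<bind>
        (\<lambda>z. return (borel \<Otimes>\<^sub>M MY \<Otimes>\<^sub>M borel) (x, y, z))))"

text \<open>Q is a (regular) conditional distribution of the second component given the first
  under the joint law J on MA x MB: a Markov kernel with J = (first marginal) disintegrated by Q.\<close>
definition cond_kernel ::
  "'a measure \<Rightarrow> 'b measure \<Rightarrow> ('a \<times> 'b) measure \<Rightarrow> ('a \<Rightarrow> 'b measure) \<Rightarrow> bool" where
  "cond_kernel MA MB J Q \<longleftrightarrow>
     Q \<in> MA \<rightarrow>\<^sub>M prob_algebra MB \<and>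
     J = distr J MA fst \<bind> (\<lambda>a. distr (Q a) (MA \<Otimes>\<^sub>M MB) (\<lambda>b. (a, b)))"

end

theory Submission
  imports Defs
begin

(* Let J_s be the joint law of (x0, y, z_t) at noise level s = sigma t, and let w = f x0 be what
   the sampler draws at time t1 (w = x0 in (i), w = z0 = E x0 in (ii)), so that the new latent is
   drawn from H w = N(E x0, sigma_t2^2 I).  Draw (x0, y, z) from J_s1, forget z and draw z' from
   H (f x0): since z is forgotten, (y, z') has the law of (y, z_t2).  Disintegrating J_s1 first along
   y (kernel Q1) and then along (z, y) (kernel R) shows that the same pair is obtained by drawing y
   from its marginal and z' from Q1 y >>= (z1. R (z1, y) >>= H).  So the sampler kernel and Q2 both
   disintegrate the law of (y, z_t2) along y, and a disintegration into a second countable space is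
   unique almost everywhere.  The Gaussian enters only as a Markov kernel in the clean latent. *)

section \<open>Gaussian kernels\<close>

lemma prob_space_std_gauss: "prob_space (std_gauss :: (real ^ 'k) measure)"
proof
  have axis_Basis: "(Basis :: (real ^ 'k) set) = range (\<lambda>i. axis i 1)"
    by (auto simp: Basis_vec_def)
  have inj_axis: "inj (\<lambda>i::'k. axis i (1::real))"
    by (auto simp: inj_def axis_eq_axis)
  have "emeasure (std_gauss :: (real ^ 'k) measure) (space std_gauss)
      = (\<integral>\<^sup>+z. ennreal (\<Prod>i\<in>UNIV. std_normal_density ((z :: real ^ 'k) $ i)) \<partial>lborel)"
    by (simp add: std_gauss_def emeasure_density)
  also have "\<dots> = (\<integral>\<^sup>+z. (\<Prod>b\<in>Basis. ennreal (std_normal_density ((z :: real ^ 'k) \<bullet> b))) \<partial>lborel)"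
    unfolding axis_Basis by (simp add: prod_ennreal prod.reindex[OF inj_axis] inner_axis)
  also have "\<dots> = (\<Prod>b\<in>(Basis :: (real ^ 'k) set). \<integral>\<^sup>+x. ennreal (std_normal_density x) \<partial>lborel)"
    by (rule nn_integral_lborel_prod) auto
  also have "(\<integral>\<^sup>+x. ennreal (std_normal_density x) \<partial>lborel) = 1"
    using prob_space.emeasure_space_1[OF prob_space_normal_density[of 1 0]]
    by (simp add: emeasure_density)
  finally show "emeasure (std_gauss :: (real ^ 'k) measure) (space std_gauss) = 1"
    by simp
qed

lemma sets_std_gauss [simp, measurable_cong]: "sets std_gauss = sets borel"
  by (simp add: std_gauss_def)

lemma sets_gauss [simp, measurable_cong]: "sets (gauss m s) = sets borel"
  by (simp add: gauss_def)

lemma prob_space_gauss: "prob_space (gauss (m :: real ^ 'k) s)"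
  unfolding gauss_def by (rule prob_space.prob_space_distr[OF prob_space_std_gauss]) measurable

lemma measurable_gauss [measurable]:
  "(\<lambda>m. gauss m s) \<in> borel \<rightarrow>\<^sub>M prob_algebra (borel :: (real ^ 'k) measure)"
  unfolding gauss_def
  by (rule measurable_distr_prob_space2[OF measurable_const])
    (simp add: space_prob_algebra prob_space_std_gauss, measurable)

section \<open>Markov kernels\<close>

lemma bind_assoc_prob_algebra:
  assumes "sets M = sets L" "f \<in> L \<rightarrow>\<^sub>M prob_algebra N" "g \<in> N \<rightarrow>\<^sub>M prob_algebra R"
  shows "M \<bind> f \<bind> g = M \<bind> (\<lambda>x. f x \<bind> g)"
  using measurable_prob_algebraD[OF assms(2)] measurable_prob_algebraD[OF assms(3)]
  by (intro bind_assoc) (simp_all add: measurable_cong_sets[OF assms(1) refl])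

lemma bind_distr_prob_algebra:
  assumes "f \<in> M \<rightarrow>\<^sub>M X" "K \<in> X \<rightarrow>\<^sub>M prob_algebra N" "space M \<noteq> {}"
  shows "distr M X f \<bind> K = M \<bind> (\<lambda>x. K (f x))"
  using assms by (intro bind_distr measurable_prob_algebraD)

lemma bind_return_bind:
  assumes "space M \<noteq> {}" "h \<in> M \<rightarrow>\<^sub>M C" "F \<in> C \<rightarrow>\<^sub>M subprob_algebra N"
  shows "M \<bind> (\<lambda>z. return C (h z)) \<bind> F = M \<bind> (\<lambda>z. F (h z))"
  using assms by (simp add: bind_return_distr' bind_distr)

lemma bind_bind_return_Pair:
  assumes M: "M \<in> space (prob_algebra A)"
    and R[measurable]: "R \<in> A \<rightarrow>\<^sub>M prob_algebra W"
    and H[measurable]: "H \<in> W \<rightarrow>\<^sub>M prob_algebra B"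
    and y[measurable]: "y \<in> space C"
  shows "M \<bind> (\<lambda>a. R a \<bind> (\<lambda>w. H w \<bind> (\<lambda>b. return (C \<Otimes>\<^sub>M B) (y, b))))
    = distr (M \<bind> (\<lambda>a. R a \<bind> H)) (C \<Otimes>\<^sub>M B) (\<lambda>b. (y, b))"
proof -
  have return_y[measurable]: "(\<lambda>b. return (C \<Otimes>\<^sub>M B) (y, b)) \<in> B \<rightarrow>\<^sub>M prob_algebra (C \<Otimes>\<^sub>M B)"
    by measurable
  have sets_M: "sets M = sets A"
    using M by (simp add: space_prob_algebra)
  have "M \<bind> (\<lambda>a. R a \<bind> (\<lambda>w. H w \<bind> (\<lambda>b. return (C \<Otimes>\<^sub>M B) (y, b))))
      = M \<bind> (\<lambda>a. R a \<bind> H \<bind> (\<lambda>b. return (C \<Otimes>\<^sub>M B) (y, b)))"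
  proof (rule bind_cong[OF refl])
    fix a assume "a \<in> space M"
    then have "sets (R a) = sets W"
      using sets_M by (intro sets_kernel[OF measurable_prob_algebraD[OF R]]) (simp cong: sets_eq_imp_space_eq)
    from bind_assoc_prob_algebra[OF this H return_y]
    show "R a \<bind> (\<lambda>w. H w \<bind> (\<lambda>b. return (C \<Otimes>\<^sub>M B) (y, b)))
        = R a \<bind> H \<bind> (\<lambda>b. return (C \<Otimes>\<^sub>M B) (y, b))"
      by simp
  qed
  also have "\<dots> = M \<bind> (\<lambda>a. R a \<bind> H) \<bind> (\<lambda>b. return (C \<Otimes>\<^sub>M B) (y, b))"
    by (rule bind_assoc_prob_algebra[OF sets_M _ return_y, symmetric]) measurable
  also have "\<dots> = distr (M \<bind> (\<lambda>a. R a \<bind> H)) (C \<Otimes>\<^sub>M B) (\<lambda>b. (y, b))"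
  proof (rule bind_return_distr')
    have RH: "(\<lambda>a. R a \<bind> H) \<in> A \<rightarrow>\<^sub>M prob_algebra B"
      by measurable
    show "space (M \<bind> (\<lambda>a. R a \<bind> H)) \<noteq> {}"
      using prob_space_bind'[OF M RH] by (rule prob_space.not_empty)
    show "(\<lambda>b. (y, b)) \<in> (M \<bind> (\<lambda>a. R a \<bind> H)) \<rightarrow>\<^sub>M C \<Otimes>\<^sub>M B"
      unfolding measurable_cong_sets[OF sets_bind'[OF M RH] refl] by simp
  qed
  finally show ?thesis .
qed

lemma measurable_pair_kernel:
  assumes [measurable]: "K \<in> MA \<rightarrow>\<^sub>M prob_algebra MB"
  shows "(\<lambda>a. distr (K a) (MA \<Otimes>\<^sub>M MB) (\<lambda>b. (a, b))) \<in> MA \<rightarrow>\<^sub>M prob_algebra (MA \<Otimes>\<^sub>M MB)"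
  by measurable

section \<open>Disintegration\<close>

lemma borel_countable_Int_stable_generator:
  obtains G :: "'a::second_countable_topology set set"
  where "countable G" "Int_stable G" "UNIV \<in> G" "sets borel = sigma_sets UNIV G"
proof -
  obtain B :: "'a set set" where B: "countable B" "topological_basis B"
    using ex_countable_basis by blast
  define G where "G = Inter ` {F. finite F \<and> F \<subseteq> B}"
  have countable: "countable G"
    unfolding G_def by (intro countable_image countable_Collect_finite_subset B(1))
  have Int_stable: "Int_stable G"
    unfolding G_def Int_stable_def
  proof safe
    fix F F' assume F: "finite F" "F \<subseteq> B" "finite F'" "F' \<subseteq> B"
    show "\<Inter>F \<inter> \<Inter>F' \<in> Inter ` {F. finite F \<and> F \<subseteq> B}"
      by (rule image_eqI[where x = "F \<union> F'"]) (use F in auto)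
  qed
  have UNIV: "UNIV \<in> G"
    unfolding G_def by (rule image_eqI[where x = "{}"]) simp_all
  have basis: "topological_basis G"
  proof (rule topological_basisI)
    show "open g" if g: "g \<in> G" for g
    proof -
      obtain F where F: "finite F" "F \<subseteq> B" "g = \<Inter>F"
        using g unfolding G_def by blast
      have "\<forall>b\<in>F. open b"
        using F(2) topological_basis_open[OF B(2)] by blast
      then show ?thesis
        unfolding F(3) by (rule open_Inter[OF F(1)])
    qed
    show "\<exists>g\<in>G. x \<in> g \<and> g \<subseteq> U" if U: "open U" "x \<in> U" for U x
    proof -
      obtain b where b: "b \<in> B" "x \<in> b" "b \<subseteq> U"
        using topological_basisE[OF B(2) U] .
      have "b \<in> G"
        unfolding G_def by (rule image_eqI[where x = "{b}"]) (use b in auto)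
      then show ?thesis
        using b by blast
    qed
  qed
  have "sets borel = sigma_sets UNIV G"
    unfolding borel_eq_countable_basis[OF countable basis] by (rule sets_measure_of) simp
  then show ?thesis
    by (rule that[OF countable Int_stable UNIV])
qed

lemma emeasure_bind_pair_kernel_Times:
  assumes \<nu>: "\<nu> \<in> space (prob_algebra MA)"
    and K[measurable]: "K \<in> MA \<rightarrow>\<^sub>M prob_algebra MB"
    and A: "A \<in> sets MA" and B: "B \<in> sets MB"
  shows "emeasure (\<nu> \<bind> (\<lambda>a. distr (K a) (MA \<Otimes>\<^sub>M MB) (\<lambda>b. (a, b)))) (A \<times> B)
    = (\<integral>\<^sup>+a. emeasure (K a) B * indicator A a \<partial>\<nu>)"
proof -
  have "emeasure (\<nu> \<bind> (\<lambda>a. distr (K a) (MA \<Otimes>\<^sub>M MB) (\<lambda>b. (a, b)))) (A \<times> B)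
      = (\<integral>\<^sup>+a. emeasure (distr (K a) (MA \<Otimes>\<^sub>M MB) (\<lambda>b. (a, b))) (A \<times> B) \<partial>\<nu>)"
    using A B by (intro emeasure_bind_prob_algebra[OF \<nu>]) (measurable, simp)
  also have "\<dots> = (\<integral>\<^sup>+a. emeasure (K a) B * indicator A a \<partial>\<nu>)"
  proof (rule nn_integral_cong)
    fix a assume "a \<in> space \<nu>"
    then have a: "a \<in> space MA"
      using \<nu> by (simp add: space_prob_algebra cong: sets_eq_imp_space_eq)
    then have sets_Ka: "sets (K a) = sets MB"
      using measurable_space[OF K] by (simp add: space_prob_algebra)
    have "emeasure (distr (K a) (MA \<Otimes>\<^sub>M MB) (\<lambda>b. (a, b))) (A \<times> B)
        = emeasure (K a) ((\<lambda>b. (a, b)) -` (A \<times> B) \<inter> space (K a))"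
      using A B a by (intro emeasure_distr) (auto simp: measurable_cong_sets[OF sets_Ka refl])
    then show "emeasure (distr (K a) (MA \<Otimes>\<^sub>M MB) (\<lambda>b. (a, b))) (A \<times> B)
        = emeasure (K a) B * indicator A a"
      using B sets_eq_imp_space_eq[OF sets_Ka] sets.sets_into_space[OF B]
      by (auto split: split_indicator simp: Int_absorb2)
  qed
  finally show ?thesis .
qed

lemma AE_emeasure_eq_of_bind_pair_kernel_eq:
  assumes \<nu>: "prob_space \<nu>" "sets \<nu> = sets MA"
    and K1[measurable]: "K1 \<in> MA \<rightarrow>\<^sub>M prob_algebra MB"
    and K2[measurable]: "K2 \<in> MA \<rightarrow>\<^sub>M prob_algebra MB"
    and eq: "\<nu> \<bind> (\<lambda>a. distr (K1 a) (MA \<Otimes>\<^sub>M MB) (\<lambda>b. (a, b)))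
      = \<nu> \<bind> (\<lambda>a. distr (K2 a) (MA \<Otimes>\<^sub>M MB) (\<lambda>b. (a, b)))"
    and B[measurable]: "B \<in> sets MB"
  shows "AE a in \<nu>. emeasure (K1 a) B = emeasure (K2 a) B"
proof -
  have \<nu>_space: "\<nu> \<in> space (prob_algebra MA)"
    using \<nu> by (simp add: space_prob_algebra)
  have measurable_K: "(\<lambda>a. emeasure (K a) B) \<in> borel_measurable \<nu>"
    if "K \<in> MA \<rightarrow>\<^sub>M prob_algebra MB" for K
    using measurable_compose[OF measurable_prob_algebraD[OF that] measurable_emeasure_subprob_algebra[OF B]]
    by (simp add: measurable_cong_sets[OF \<nu>(2) refl])
  have "(\<integral>\<^sup>+a. emeasure (K1 a) B \<partial>\<nu>) \<le> (\<integral>\<^sup>+a. 1 \<partial>\<nu>)"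
    using measurable_space[OF K1] \<nu>(2)
    by (intro nn_integral_mono)
      (auto simp: space_prob_algebra prob_space.emeasure_le_1 cong: sets_eq_imp_space_eq)
  then have finite: "(\<integral>\<^sup>+a. emeasure (K1 a) B \<partial>\<nu>) \<noteq> \<infinity>"
    using prob_space.emeasure_space_1[OF \<nu>(1)] by (auto simp: top_unique)
  have "density \<nu> (\<lambda>a. emeasure (K1 a) B) = density \<nu> (\<lambda>a. emeasure (K2 a) B)"
  proof (rule measure_eqI)
    fix A assume "A \<in> sets (density \<nu> (\<lambda>a. emeasure (K1 a) B))"
    then have A: "A \<in> sets MA"
      using \<nu>(2) by simp
    show "emeasure (density \<nu> (\<lambda>a. emeasure (K1 a) B)) A
        = emeasure (density \<nu> (\<lambda>a. emeasure (K2 a) B)) A"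
      using emeasure_bind_pair_kernel_Times[OF \<nu>_space K1 A B]
        emeasure_bind_pair_kernel_Times[OF \<nu>_space K2 A B] eq A \<nu>(2) measurable_K[OF K1] measurable_K[OF K2]
      by (simp add: emeasure_density)
  qed simp
  then show ?thesis
    using finite_density_unique[OF measurable_K[OF K1] measurable_K[OF K2] _ _ finite] by simp
qed

lemma disintegration_unique:
  fixes K1 K2 :: "'a \<Rightarrow> 'b::second_countable_topology measure"
  assumes \<nu>: "prob_space \<nu>" "sets \<nu> = sets MA"
    and K1[measurable]: "K1 \<in> MA \<rightarrow>\<^sub>M prob_algebra borel"
    and K2[measurable]: "K2 \<in> MA \<rightarrow>\<^sub>M prob_algebra borel"
    and eq: "\<nu> \<bind> (\<lambda>a. distr (K1 a) (MA \<Otimes>\<^sub>M borel) (\<lambda>b. (a, b)))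
      = \<nu> \<bind> (\<lambda>a. distr (K2 a) (MA \<Otimes>\<^sub>M borel) (\<lambda>b. (a, b)))"
  shows "AE a in \<nu>. K1 a = K2 a"
proof -
  obtain G :: "'b set set" where G: "countable G" "Int_stable G" "UNIV \<in> G"
    "sets borel = sigma_sets UNIV G"
    using borel_countable_Int_stable_generator by blast
  have "AE a in \<nu>. \<forall>g\<in>G. emeasure (K1 a) g = emeasure (K2 a) g"
    using G AE_emeasure_eq_of_bind_pair_kernel_eq[OF \<nu> K1 K2 eq]
    by (subst AE_ball_countable) (auto intro: sigma_sets.Basic)
  then show ?thesis
  proof (rule AE_mp[OF _ AE_I2[OF impI]])
    fix a assume "a \<in> space \<nu>" and agree: "\<forall>g\<in>G. emeasure (K1 a) g = emeasure (K2 a) g"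
    then have "a \<in> space MA"
      using \<nu>(2) by (simp cong: sets_eq_imp_space_eq)
    then have "prob_space (K1 a)" and sets_K: "sets (K1 a) = sets borel" "sets (K2 a) = sets borel"
      using measurable_space[OF K1] measurable_space[OF K2] by (auto simp: space_prob_algebra)
    then have "emeasure (K1 a) UNIV \<noteq> \<infinity>"
      using prob_space.emeasure_space_1 sets_eq_imp_space_eq[OF sets_K(1)] by force
    then show "K1 a = K2 a"
      using G agree sets_K
      by (intro measure_eqI_generator_eq_countable[where E = G and \<Omega> = UNIV and A = "{UNIV}"])
        auto
  qed
qed

lemma cond_kernel_unique:
  fixes Q Q' :: "'a \<Rightarrow> 'b::second_countable_topology measure"
  assumes J: "prob_space J"
    and Q: "cond_kernel MA borel J Q" and Q': "cond_kernel MA borel J Q'"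
  shows "AE a in distr J MA fst. Q a = Q' a"
proof (rule disintegration_unique)
  have Q_measurable[measurable]: "Q \<in> MA \<rightarrow>\<^sub>M prob_algebra borel"
    and J_eq: "J = distr J MA fst \<bind> (\<lambda>a. distr (Q a) (MA \<Otimes>\<^sub>M borel) (\<lambda>b. (a, b)))"
    using Q by (auto simp: cond_kernel_def)
  have "space MA \<noteq> {}"
  proof
    assume "space MA = {}"
    then have "J = count_space {}"
      by (subst J_eq) (simp add: bind_empty)
    then show False
      using prob_space.emeasure_space_1[OF J] by simp
  qed
  moreover have "(\<lambda>a. distr (Q a) (MA \<Otimes>\<^sub>M borel) (\<lambda>b. (a, b)))
      \<in> distr J MA fst \<rightarrow>\<^sub>M subprob_algebra (MA \<Otimes>\<^sub>M borel)"
    using measurable_prob_algebraD[OF measurable_pair_kernel[OF Q_measurable]]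
    by (simp cong: measurable_cong_sets)
  ultimately have "sets (distr J MA fst \<bind> (\<lambda>a. distr (Q a) (MA \<Otimes>\<^sub>M borel) (\<lambda>b. (a, b))))
      = sets (MA \<Otimes>\<^sub>M borel)"
    by (intro sets_bind_measurable) simp_all
  then have sets_J: "sets J = sets (MA \<Otimes>\<^sub>M borel)"
    by (rule trans[OF arg_cong[where f = sets, OF J_eq]])
  have "fst \<in> J \<rightarrow>\<^sub>M MA"
    unfolding measurable_cong_sets[OF sets_J refl] by simp
  then show "prob_space (distr J MA fst)"
    by (rule prob_space.prob_space_distr[OF J])
qed (use Q Q' in \<open>auto simp: cond_kernel_def\<close>)

lemma bind_cond_kernel:
  assumes Q: "cond_kernel MA MB J Q"
    and F[measurable]: "F \<in> MA \<Otimes>\<^sub>M MB \<rightarrow>\<^sub>M prob_algebra N"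
  shows "J \<bind> F = distr J MA fst \<bind> (\<lambda>a. Q a \<bind> (\<lambda>b. F (a, b)))"
proof -
  have Q_measurable[measurable]: "Q \<in> MA \<rightarrow>\<^sub>M prob_algebra MB"
    and J_eq: "J = distr J MA fst \<bind> (\<lambda>a. distr (Q a) (MA \<Otimes>\<^sub>M MB) (\<lambda>b. (a, b)))"
    using Q by (auto simp: cond_kernel_def)
  have "J \<bind> F = distr J MA fst \<bind> (\<lambda>a. distr (Q a) (MA \<Otimes>\<^sub>M MB) (\<lambda>b. (a, b)) \<bind> F)"
    using measurable_prob_algebraD[OF measurable_pair_kernel[OF Q_measurable]]
      measurable_prob_algebraD[OF F]
    by (subst J_eq, intro bind_assoc) (simp_all cong: measurable_cong_sets)
  also have "\<dots> = distr J MA fst \<bind> (\<lambda>a. Q a \<bind> (\<lambda>b. F (a, b)))"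
  proof (rule bind_cong[OF refl])
    fix a assume "a \<in> space (distr J MA fst)"
    then have a[measurable]: "a \<in> space MA"
      by simp
    then have "prob_space (Q a)" and sets_Qa: "sets (Q a) = sets MB"
      using measurable_space[OF Q_measurable] by (auto simp: space_prob_algebra)
    then show "distr (Q a) (MA \<Otimes>\<^sub>M MB) (\<lambda>b. (a, b)) \<bind> F = Q a \<bind> (\<lambda>b. F (a, b))"
      by (intro bind_distr[OF _ measurable_prob_algebraD[OF F]])
        (auto simp: measurable_cong_sets[OF sets_Qa refl] prob_space.not_empty)
  qed
  finally show ?thesis .
qed

section \<open>The latent measurement model\<close>

locale latent_model =
  fixes P :: "(real ^ 'n) measure" and MY :: "'y measure"
    and Ky :: "real ^ 'n \<Rightarrow> 'y measure" and E :: "real ^ 'n \<Rightarrow> real ^ 'k"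
  assumes prob_space_P: "prob_space P" and sets_P [measurable_cong]: "sets P = sets borel"
    and Ky [measurable]: "Ky \<in> borel \<rightarrow>\<^sub>M prob_algebra MY"
    and E [measurable]: "E \<in> borel_measurable borel"
begin

lemma space_bind_Ky: "space (P \<bind> Ky) = space MY"
  using prob_space_P sets_P by (simp add: space_bind_measurable measurable_prob_algebraD prob_space.not_empty)

lemma joint3_in_prob_algebra:
  "joint3 P MY Ky E s \<in> space (prob_algebra (borel \<Otimes>\<^sub>M MY \<Otimes>\<^sub>M (borel :: (real ^ 'k) measure)))"
proof -
  have P: "P \<in> space (prob_algebra borel)"
    using prob_space_P sets_P by (simp add: space_prob_algebra)
  have kernel: "(\<lambda>x. Ky x \<bind> (\<lambda>y. gauss (E x) s \<bind> (\<lambda>z. return (borel \<Otimes>\<^sub>M MY \<Otimes>\<^sub>M borel) (x, y, z))))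
      \<in> borel \<rightarrow>\<^sub>M prob_algebra (borel \<Otimes>\<^sub>M MY \<Otimes>\<^sub>M (borel :: (real ^ 'k) measure))"
    by measurable
  show ?thesis
    unfolding joint3_def space_prob_algebra
    using prob_space_bind'[OF P kernel] sets_bind'[OF P kernel] by simp
qed

lemma sets_joint3 [measurable_cong]:
  "sets (joint3 P MY Ky E s) = sets (borel \<Otimes>\<^sub>M MY \<Otimes>\<^sub>M (borel :: (real ^ 'k) measure))"
  using joint3_in_prob_algebra by (simp add: space_prob_algebra)

lemma prob_space_joint3: "prob_space (joint3 P MY Ky E s)"
  using joint3_in_prob_algebra by (simp add: space_prob_algebra)

lemma prob_space_distr_joint3:
  assumes "g \<in> borel \<Otimes>\<^sub>M MY \<Otimes>\<^sub>M (borel :: (real ^ 'k) measure) \<rightarrow>\<^sub>M N"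
  shows "prob_space (distr (joint3 P MY Ky E s) N g)"
  using assms by (intro prob_space.prob_space_distr[OF prob_space_joint3]) simp

lemma bind_joint3:
  assumes F[measurable]: "F \<in> borel \<Otimes>\<^sub>M MY \<Otimes>\<^sub>M (borel :: (real ^ 'k) measure) \<rightarrow>\<^sub>M prob_algebra N"
  shows "joint3 P MY Ky E s \<bind> F = P \<bind> (\<lambda>x. Ky x \<bind> (\<lambda>y. gauss (E x) s \<bind> (\<lambda>z. F (x, y, z))))"
proof -
  let ?M3 = "borel \<Otimes>\<^sub>M MY \<Otimes>\<^sub>M (borel :: (real ^ 'k) measure)"
  have "joint3 P MY Ky E s \<bind> F
      = P \<bind> (\<lambda>x. Ky x \<bind> (\<lambda>y. gauss (E x) s \<bind> (\<lambda>z. return ?M3 (x, y, z))) \<bind> F)"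
    unfolding joint3_def by (rule bind_assoc_prob_algebra[OF sets_P]) measurable
  also have "\<dots> = P \<bind> (\<lambda>x. Ky x \<bind> (\<lambda>y. gauss (E x) s \<bind> (\<lambda>z. F (x, y, z))))"
  proof (rule bind_cong[OF refl])
    fix x assume "x \<in> space P"
    then have x[measurable]: "x \<in> space borel"
      using sets_P by (simp cong: sets_eq_imp_space_eq)
    then have sets_Ky: "sets (Ky x) = sets MY"
      using measurable_space[OF Ky] by (simp add: space_prob_algebra)
    have "Ky x \<bind> (\<lambda>y. gauss (E x) s \<bind> (\<lambda>z. return ?M3 (x, y, z))) \<bind> F
        = Ky x \<bind> (\<lambda>y. gauss (E x) s \<bind> (\<lambda>z. return ?M3 (x, y, z)) \<bind> F)"
      by (rule bind_assoc_prob_algebra[OF sets_Ky]) measurable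
    also have "\<dots> = Ky x \<bind> (\<lambda>y. gauss (E x) s \<bind> (\<lambda>z. F (x, y, z)))"
    proof (rule bind_cong[OF refl])
      fix y assume "y \<in> space (Ky x)"
      then have [measurable]: "y \<in> space MY"
        using sets_Ky by (simp cong: sets_eq_imp_space_eq)
      show "gauss (E x) s \<bind> (\<lambda>z. return ?M3 (x, y, z)) \<bind> F
          = gauss (E x) s \<bind> (\<lambda>z. F (x, y, z))"
        by (intro bind_return_bind[OF _ _ measurable_prob_algebraD[OF F]]
            prob_space.not_empty prob_space_gauss) simp
    qed
    finally show "Ky x \<bind> (\<lambda>y. gauss (E x) s \<bind> (\<lambda>z. return ?M3 (x, y, z))) \<bind> F
        = Ky x \<bind> (\<lambda>y. gauss (E x) s \<bind> (\<lambda>z. F (x, y, z)))" .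
  qed
  finally show ?thesis .
qed

lemma distr_joint3:
  assumes [measurable]: "g \<in> borel \<Otimes>\<^sub>M MY \<Otimes>\<^sub>M (borel :: (real ^ 'k) measure) \<rightarrow>\<^sub>M N"
  shows "distr (joint3 P MY Ky E s) N g
    = P \<bind> (\<lambda>x. Ky x \<bind> (\<lambda>y. gauss (E x) s \<bind> (\<lambda>z. return N (g (x, y, z)))))"
proof -
  have "distr (joint3 P MY Ky E s) N g = joint3 P MY Ky E s \<bind> (\<lambda>p. return N (g p))"
    using prob_space.not_empty[OF prob_space_joint3] by (simp add: bind_return_distr')
  also have "\<dots> = P \<bind> (\<lambda>x. Ky x \<bind> (\<lambda>y. gauss (E x) s \<bind> (\<lambda>z. return N (g (x, y, z)))))"
    by (rule bind_joint3) measurable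
  finally show ?thesis .
qed

lemma bind_joint3_noise_free:
  assumes F[measurable]: "F \<in> borel \<Otimes>\<^sub>M MY \<rightarrow>\<^sub>M prob_algebra N"
  shows "joint3 P MY Ky E s \<bind> (\<lambda>(x, y, z). F (x, y)) = P \<bind> (\<lambda>x. Ky x \<bind> (\<lambda>y. F (x, y)))"
proof -
  have "(\<lambda>(x, y, z). F (x, y)) \<in> borel \<Otimes>\<^sub>M MY \<Otimes>\<^sub>M (borel :: (real ^ 'k) measure) \<rightarrow>\<^sub>M prob_algebra N"
    by measurable
  from bind_joint3[OF this] have "joint3 P MY Ky E s \<bind> (\<lambda>(x, y, z). F (x, y))
      = P \<bind> (\<lambda>x. Ky x \<bind> (\<lambda>y. gauss (E x) s \<bind> (\<lambda>z. F (x, y))))"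
    by simp
  also have "\<dots> = P \<bind> (\<lambda>x. Ky x \<bind> (\<lambda>y. F (x, y)))"
  proof (intro bind_cong refl)
    fix x y assume "x \<in> space P" "y \<in> space (Ky x)"
    then have "(x, y) \<in> space (borel \<Otimes>\<^sub>M MY)"
      using sets_P measurable_space[OF Ky]
      by (auto simp: space_pair_measure space_prob_algebra cong: sets_eq_imp_space_eq)
    then have "prob_space (F (x, y))"
      using measurable_space[OF F] by (simp add: space_prob_algebra)
    then show "gauss (E x) s \<bind> (\<lambda>z. F (x, y)) = F (x, y)"
      by (intro bind_const' prob_space_gauss prob_space_imp_subprob_space)
  qed
  finally show ?thesis .
qed

lemma y_marginal_joint3:
  "distr (distr (joint3 P MY Ky E s) (MY \<Otimes>\<^sub>M borel) (\<lambda>(x, y, z). (y, z))) MY fst = P \<bind> Ky"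
proof -
  have "(\<lambda>(x, y, z). (y, z)) \<in> joint3 P MY Ky E s \<rightarrow>\<^sub>M MY \<Otimes>\<^sub>M borel"
    by measurable
  then have "distr (distr (joint3 P MY Ky E s) (MY \<Otimes>\<^sub>M borel) (\<lambda>(x, y, z). (y, z))) MY fst
      = distr (joint3 P MY Ky E s) MY (\<lambda>(x, y, z). y)"
    by (subst distr_distr) (simp_all add: comp_def split_beta')
  also have "\<dots> = joint3 P MY Ky E s \<bind> (\<lambda>(x, y, z). return MY y)"
    using prob_space.not_empty[OF prob_space_joint3]
    by (subst bind_return_distr'[symmetric]) (simp_all add: split_beta')
  also have "\<dots> = P \<bind> (\<lambda>x. Ky x \<bind> return MY)"
  proof -
    have "(\<lambda>(x, y). return MY y) \<in> borel \<Otimes>\<^sub>M MY \<rightarrow>\<^sub>M prob_algebra MY"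
      by measurable
    from bind_joint3_noise_free[OF this] show ?thesis
      by simp
  qed
  also have "\<dots> = P \<bind> Ky"
    using measurable_space[OF Ky] sets_P
    by (intro bind_cong refl bind_return'') (auto simp: space_prob_algebra cong: sets_eq_imp_space_eq)
  finally show ?thesis .
qed

lemma bind_joint3_renoise:
  "joint3 P MY Ky E s \<bind> (\<lambda>(x, y, z). gauss (E x) s' \<bind> (\<lambda>z'. return (MY \<Otimes>\<^sub>M borel) (y, z')))
    = distr (joint3 P MY Ky E s') (MY \<Otimes>\<^sub>M borel) (\<lambda>(x, y, z). (y, z))"
proof -
  have F: "(\<lambda>(x, y). gauss (E x) s' \<bind> (\<lambda>z'. return (MY \<Otimes>\<^sub>M borel) (y, z')))
      \<in> borel \<Otimes>\<^sub>M MY \<rightarrow>\<^sub>M prob_algebra (MY \<Otimes>\<^sub>M borel)"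
    by measurable
  have g: "(\<lambda>(x, y, z). (y, z))
      \<in> borel \<Otimes>\<^sub>M MY \<Otimes>\<^sub>M (borel :: (real ^ 'k) measure) \<rightarrow>\<^sub>M MY \<Otimes>\<^sub>M borel"
    by measurable
  show ?thesis
    using bind_joint3_noise_free[OF F, of s] distr_joint3[OF g, of s'] by simp
qed

lemma bind_joint3_cond_kernels:
  assumes f[measurable]: "f \<in> borel \<rightarrow>\<^sub>M MW"
    and Q: "cond_kernel MY borel
      (distr (joint3 P MY Ky E s) (MY \<Otimes>\<^sub>M borel) (\<lambda>(x, y, z). (y, z))) Q"
    and R: "cond_kernel (borel \<Otimes>\<^sub>M MY) MW
      (distr (joint3 P MY Ky E s) ((borel \<Otimes>\<^sub>M MY) \<Otimes>\<^sub>M MW) (\<lambda>(x, y, z). ((z, y), f x))) R"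
    and G[measurable]: "G \<in> MY \<Otimes>\<^sub>M MW \<rightarrow>\<^sub>M prob_algebra N"
  shows "joint3 P MY Ky E s \<bind> (\<lambda>(x, y, z). G (y, f x))
    = (P \<bind> Ky) \<bind> (\<lambda>y. Q y \<bind> (\<lambda>z. R (z, y) \<bind> (\<lambda>w. G (y, w))))"
proof -
  let ?D = "distr (joint3 P MY Ky E s) (MY \<Otimes>\<^sub>M borel) (\<lambda>(x, y, z). (y, z))"
  let ?T = "distr (joint3 P MY Ky E s) ((borel \<Otimes>\<^sub>M MY) \<Otimes>\<^sub>M MW) (\<lambda>(x, y, z). ((z, y), f x))"
  have [measurable]: "R \<in> borel \<Otimes>\<^sub>M MY \<rightarrow>\<^sub>M prob_algebra MW"
    using R by (simp add: cond_kernel_def)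
  have "(\<lambda>(x, y, z). ((z, y), f x)) \<in> joint3 P MY Ky E s \<rightarrow>\<^sub>M (borel \<Otimes>\<^sub>M MY) \<Otimes>\<^sub>M MW"
    "(\<lambda>(a, w). G (snd a, w)) \<in> (borel \<Otimes>\<^sub>M MY) \<Otimes>\<^sub>M MW \<rightarrow>\<^sub>M prob_algebra N"
    by measurable
  from bind_distr_prob_algebra[OF this prob_space.not_empty[OF prob_space_joint3]]
  have "joint3 P MY Ky E s \<bind> (\<lambda>(x, y, z). G (y, f x)) = ?T \<bind> (\<lambda>(a, w). G (snd a, w))"
    by (simp add: split_beta')
  also have "\<dots> = distr ?T (borel \<Otimes>\<^sub>M MY) fst \<bind> (\<lambda>(z, y). R (z, y) \<bind> (\<lambda>w. G (y, w)))"
    by (subst bind_cond_kernel[OF R]) (simp_all add: split_beta', measurable)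
  also have "distr ?T (borel \<Otimes>\<^sub>M MY) fst = distr ?D (borel \<Otimes>\<^sub>M MY) (\<lambda>(y, z). (z, y))"
    by (simp add: distr_distr comp_def split_beta')
  also have "\<dots> \<bind> (\<lambda>(z, y). R (z, y) \<bind> (\<lambda>w. G (y, w))) = ?D \<bind> (\<lambda>(y, z). R (z, y) \<bind> (\<lambda>w. G (y, w)))"
  proof -
    have "(\<lambda>(y, z). (z, y)) \<in> ?D \<rightarrow>\<^sub>M borel \<Otimes>\<^sub>M MY"
      "(\<lambda>(z, y). R (z, y) \<bind> (\<lambda>w. G (y, w))) \<in> borel \<Otimes>\<^sub>M MY \<rightarrow>\<^sub>M prob_algebra N"
      "space ?D \<noteq> {}"
      by (measurable, intro prob_space.not_empty prob_space_distr_joint3, measurable)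
    from bind_distr_prob_algebra[OF this] show ?thesis
      by (simp add: split_beta')
  qed
  also have "\<dots> = distr ?D MY fst \<bind> (\<lambda>y. Q y \<bind> (\<lambda>z. R (z, y) \<bind> (\<lambda>w. G (y, w))))"
  proof -
    have "(\<lambda>(y, z). R (z, y) \<bind> (\<lambda>w. G (y, w))) \<in> MY \<Otimes>\<^sub>M borel \<rightarrow>\<^sub>M prob_algebra N"
      by measurable
    from bind_cond_kernel[OF Q this] show ?thesis
      by simp
  qed
  finally show ?thesis
    by (simp only: y_marginal_joint3)
qed

lemma resampling_cond_kernel:
  fixes f :: "real ^ 'n \<Rightarrow> 'w" and H :: "'w \<Rightarrow> (real ^ 'k) measure"
  assumes f[measurable]: "f \<in> borel \<rightarrow>\<^sub>M MW"
    and H[measurable]: "H \<in> MW \<rightarrow>\<^sub>M prob_algebra borel"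
    and H_f: "\<And>x. H (f x) = gauss (E x) s'"
    and Q: "cond_kernel MY borel
      (distr (joint3 P MY Ky E s) (MY \<Otimes>\<^sub>M borel) (\<lambda>(x, y, z). (y, z))) Q"
    and R: "cond_kernel (borel \<Otimes>\<^sub>M MY) MW
      (distr (joint3 P MY Ky E s) ((borel \<Otimes>\<^sub>M MY) \<Otimes>\<^sub>M MW) (\<lambda>(x, y, z). ((z, y), f x))) R"
  shows "cond_kernel MY borel
    (distr (joint3 P MY Ky E s') (MY \<Otimes>\<^sub>M borel) (\<lambda>(x, y, z). (y, z)))
    (\<lambda>y. Q y \<bind> (\<lambda>z. R (z, y) \<bind> H))"
proof -
  have [measurable]: "Q \<in> MY \<rightarrow>\<^sub>M prob_algebra borel" "R \<in> borel \<Otimes>\<^sub>M MY \<rightarrow>\<^sub>M prob_algebra MW"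
    using Q R by (simp_all add: cond_kernel_def)
  have resample[measurable]: "(\<lambda>(y, w). H w \<bind> (\<lambda>z'. return (MY \<Otimes>\<^sub>M borel) (y, z')))
      \<in> MY \<Otimes>\<^sub>M MW \<rightarrow>\<^sub>M prob_algebra (MY \<Otimes>\<^sub>M borel)"
    by measurable
  have "distr (joint3 P MY Ky E s') (MY \<Otimes>\<^sub>M borel) (\<lambda>(x, y, z). (y, z))
      = joint3 P MY Ky E s \<bind> (\<lambda>(x, y, z). H (f x) \<bind> (\<lambda>z'. return (MY \<Otimes>\<^sub>M borel) (y, z')))"
    by (simp add: H_f bind_joint3_renoise)
  also have "\<dots> = (P \<bind> Ky) \<bind>
      (\<lambda>y. Q y \<bind> (\<lambda>z. R (z, y) \<bind> (\<lambda>w. H w \<bind> (\<lambda>z'. return (MY \<Otimes>\<^sub>M borel) (y, z')))))"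
    using bind_joint3_cond_kernels[OF f Q R resample] by simp
  also have "\<dots> = (P \<bind> Ky) \<bind> (\<lambda>y. distr (Q y \<bind> (\<lambda>z. R (z, y) \<bind> H)) (MY \<Otimes>\<^sub>M borel) (\<lambda>z. (y, z)))"
  proof (rule bind_cong[OF refl])
    fix y assume "y \<in> space (P \<bind> Ky)"
    then have "y \<in> space MY" "Q y \<in> space (prob_algebra borel)"
      using measurable_space[of Q MY "prob_algebra borel"] by (simp_all add: space_bind_Ky)
    then show "Q y \<bind> (\<lambda>z. R (z, y) \<bind> (\<lambda>w. H w \<bind> (\<lambda>z'. return (MY \<Otimes>\<^sub>M borel) (y, z'))))
        = distr (Q y \<bind> (\<lambda>z. R (z, y) \<bind> H)) (MY \<Otimes>\<^sub>M borel) (\<lambda>z. (y, z))"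
      by (intro bind_bind_return_Pair H) measurable
  qed
  finally show ?thesis
    unfolding cond_kernel_def y_marginal_joint3 by simp measurable
qed

end

theorem proposition2:
  fixes P :: "(real ^ 'n) measure"
    and MY :: "'y measure"
    and Ky :: "real ^ 'n \<Rightarrow> 'y measure"
    and E :: "real ^ 'n \<Rightarrow> real ^ 'k"
    and \<sigma> :: "'t \<Rightarrow> real"
    and t1 t2 :: 't
    and Q1 Q2 :: "'y \<Rightarrow> (real ^ 'k) measure"
    and R :: "(real ^ 'k) \<times> 'y \<Rightarrow> (real ^ 'n) measure"
    and R0 :: "(real ^ 'k) \<times> 'y \<Rightarrow> (real ^ 'k) measure"
  assumes P: "prob_space P" "sets P = sets borel"
    and Ky: "Ky \<in> borel \<rightarrow>\<^sub>M prob_algebra MY"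
    and E: "E \<in> borel_measurable borel"
    and \<sigma>: "\<And>t. \<sigma> t \<ge> 0"
    and Q1: "cond_kernel MY borel
               (distr (joint3 P MY Ky E (\<sigma> t1)) (MY \<Otimes>\<^sub>M borel) (\<lambda>(x, y, z). (y, z))) Q1"
    and Q2: "cond_kernel MY borel
               (distr (joint3 P MY Ky E (\<sigma> t2)) (MY \<Otimes>\<^sub>M borel) (\<lambda>(x, y, z). (y, z))) Q2"
    and R: "cond_kernel (borel \<Otimes>\<^sub>M MY) borel
              (distr (joint3 P MY Ky E (\<sigma> t1)) ((borel \<Otimes>\<^sub>M MY) \<Otimes>\<^sub>M borel)
                 (\<lambda>(x, y, z). ((z, y), x))) R"
    and R0: "cond_kernel (borel \<Otimes>\<^sub>M MY) borel
              (distr (joint3 P MY Ky E (\<sigma> t1)) ((borel \<Otimes>\<^sub>M MY) \<Otimes>\<^sub>M borel)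
                 (\<lambda>(x, y, z). ((z, y), E x))) R0"
  shows "AE y in P \<bind> Ky.
           (Q1 y \<bind> (\<lambda>z1. R (z1, y) \<bind> (\<lambda>x0. gauss (E x0) (\<sigma> t2)))) = Q2 y
         \<and> (Q1 y \<bind> (\<lambda>z1. R0 (z1, y) \<bind> (\<lambda>z0. gauss z0 (\<sigma> t2)))) = Q2 y"
proof -
  interpret latent_model P MY Ky E
    by (rule latent_model.intro[OF P Ky E])
  let ?D2 = "distr (joint3 P MY Ky E (\<sigma> t2)) (MY \<Otimes>\<^sub>M borel) (\<lambda>(x, y, z). (y, z))"
  have D2: "prob_space ?D2"
    by (rule prob_space_distr_joint3) measurable
  have "cond_kernel MY borel ?D2 (\<lambda>y. Q1 y \<bind> (\<lambda>z1. R (z1, y) \<bind> (\<lambda>x0. gauss (E x0) (\<sigma> t2))))"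
    by (rule resampling_cond_kernel[where f = "\<lambda>x. x", OF _ _ _ Q1 R]) simp_all
  from cond_kernel_unique[OF D2 this Q2, unfolded y_marginal_joint3]
  have i: "AE y in P \<bind> Ky. Q1 y \<bind> (\<lambda>z1. R (z1, y) \<bind> (\<lambda>x0. gauss (E x0) (\<sigma> t2))) = Q2 y" .
  have "cond_kernel MY borel ?D2 (\<lambda>y. Q1 y \<bind> (\<lambda>z1. R0 (z1, y) \<bind> (\<lambda>z0. gauss z0 (\<sigma> t2))))"
    by (rule resampling_cond_kernel[OF E _ _ Q1 R0]) simp_all
  from cond_kernel_unique[OF D2 this Q2, unfolded y_marginal_joint3]
  have ii: "AE y in P \<bind> Ky. Q1 y \<bind> (\<lambda>z1. R0 (z1, y) \<bind> (\<lambda>z0. gauss z0 (\<sigma> t2))) = Q2 y" .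
  from i ii show ?thesis
    by (rule AE_conjI)
qed

end
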